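(* In $\mathrm{HMF}(\mathbb{C}^2,\Gamma_W,W)$ the objects $K_{y,1},\dots,K_{y,q-1}$ are exceptional (graded endomorphisms are scalar multiples of the identity in degree $0$) and pairwise orthogonal.
   Context: Let $p,q\ge2$ be integers and $W=x^py+y^q$. Let $L$ be the abelian group generated by $\vec x,\vec y,\vec c$ modulo $p\vec x+\vec y=q\vec y=\vec c$; $S=\mathbb{C}[x,y]$ is $L$-graded with $\deg x=\vec x$, $\deg y=\vec y$, and $R=S/(W)$; $M(l)_k=M_{k+l}$. $\mathrm{HMF}(\mathbb{C}^2,\Gamma_W,W)$ is the homotopy category of $L$-graded matrix factorisations of $W$, equivalent to $D^b(\mathrm{gr}R)/\mathrm{Perf}(\mathrm{gr}R)$, in which a finitely generated $L$-graded $R$-module is identified with its stabilisation; $\mathrm{Hom}^n(X,Y)=\mathrm{Hom}(X,Y[n])$. $K_y=R/(y)$ and $K_{y,j}=K_y((j+1-q)\vec y)$. *)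

theory Defs
  imports Complex_Main "HOL-Computational_Algebra.Polynomial"
begin

text \<open>S = C[x,y] is modelled as complex poly poly (outer variable x, inner variable y);
 the monomial x^a y^b has coefficient coeff (coeff f a) b.
 The grading group L = <x,y,c | p x + y = q y = c> is modelled by int pairs (a,b) = a x + b y
 modulo the relation p x = (q-1) y, i.e. modulo the subgroup generated by (p, -(q-1));
 c is represented by (0,q).\<close>

type_synonym deg = "int \<times> int"
type_synonym pol = "complex poly poly"
type_synonym mat = "nat \<Rightarrow> nat \<Rightarrow> pol"

definition Xv :: pol where "Xv = [:0, 1:]"
definition Yv :: pol where "Yv = [:[:0, 1:]:]"
definition Wp :: "nat \<Rightarrow> nat \<Rightarrow> pol" where "Wp p q = Xv ^ p * Yv + Yv ^ q"

definition Leq :: "nat \<Rightarrow> nat \<Rightarrow> deg \<Rightarrow> deg \<Rightarrow> bool" where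
  "Leq p q d e \<longleftrightarrow> (\<exists>k::int. fst d - fst e = k * int p \<and> snd d - snd e = - k * (int q - 1))"

definition cdeg :: "nat \<Rightarrow> deg" where "cdeg q = (0, int q)"
definition ydeg :: deg where "ydeg = (0, 1)"

definition dadd :: "deg \<Rightarrow> deg \<Rightarrow> deg" where "dadd d e = (fst d + fst e, snd d + snd e)"
definition dsub :: "deg \<Rightarrow> deg \<Rightarrow> deg" where "dsub d e = (fst d - fst e, snd d - snd e)"
definition dscale :: "int \<Rightarrow> deg \<Rightarrow> deg" where "dscale m d = (m * fst d, m * snd d)"

definition homog :: "nat \<Rightarrow> nat \<Rightarrow> pol \<Rightarrow> deg \<Rightarrow> bool" where
  "homog p q f d \<longleftrightarrow> (\<forall>a b. coeff (coeff f a) b \<noteq> 0 \<longrightarrow> Leq p q (int a, int b) d)"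

text \<open>A degree-0 graded map from the free module (+)_j S(src!j) to (+)_i S(tgt!i):
 entry (i,j) is homogeneous of degree tgt!i - src!j.\<close>
definition hom_mat :: "nat \<Rightarrow> nat \<Rightarrow> mat \<Rightarrow> deg list \<Rightarrow> deg list \<Rightarrow> bool" where
  "hom_mat p q A src tgt \<longleftrightarrow>
     (\<forall>i<length tgt. \<forall>j<length src. homog p q (A i j) (dsub (tgt ! i) (src ! j)))"

definition mmul :: "nat \<Rightarrow> mat \<Rightarrow> mat \<Rightarrow> mat" where
  "mmul n A B = (\<lambda>i j. \<Sum>l<n. A i l * B l j)"

definition madd :: "mat \<Rightarrow> mat \<Rightarrow> mat" where "madd A B = (\<lambda>i j. A i j + B i j)"
definition mneg :: "mat \<Rightarrow> mat" where "mneg A = (\<lambda>i j. - A i j)"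

definition meq :: "nat \<Rightarrow> nat \<Rightarrow> mat \<Rightarrow> mat \<Rightarrow> bool" where
  "meq r c A B \<longleftrightarrow> (\<forall>i<r. \<forall>j<c. A i j = B i j)"

definition smat :: "pol \<Rightarrow> mat" where "smat a = (\<lambda>i j. if i = j then a else 0)"

text \<open>An L-graded matrix factorisation F0 --f0--> F1 --f1--> F0(c).\<close>
record mf =
  d0 :: "deg list"
  d1 :: "deg list"
  f0 :: mat
  f1 :: mat

definition twistd :: "deg \<Rightarrow> deg list \<Rightarrow> deg list" where
  "twistd l ds = map (dadd l) ds"

definition is_mf :: "nat \<Rightarrow> nat \<Rightarrow> mf \<Rightarrow> bool" where
  "is_mf p q X \<longleftrightarrow>
     hom_mat p q (f0 X) (d0 X) (d1 X) \<and>
     hom_mat p q (f1 X) (d1 X) (twistd (cdeg q) (d0 X)) \<and>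
     meq (length (d0 X)) (length (d0 X)) (mmul (length (d1 X)) (f1 X) (f0 X)) (smat (Wp p q)) \<and>
     meq (length (d1 X)) (length (d1 X)) (mmul (length (d0 X)) (f0 X) (f1 X)) (smat (Wp p q))"

definition mf_twist :: "deg \<Rightarrow> mf \<Rightarrow> mf" where
  "mf_twist l X = X\<lparr>d0 := twistd l (d0 X), d1 := twistd l (d1 X)\<rparr>"

definition mf_shift1 :: "nat \<Rightarrow> mf \<Rightarrow> mf" where
  "mf_shift1 q X = \<lparr>d0 = d1 X, d1 = twistd (cdeg q) (d0 X), f0 = mneg (f1 X), f1 = mneg (f0 X)\<rparr>"

text \<open>X[n] for n in Z, using [2] = (c).\<close>
definition mf_shift :: "nat \<Rightarrow> int \<Rightarrow> mf \<Rightarrow> mf" where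
  "mf_shift q n X =
     (if even n then mf_twist (dscale (n div 2) (cdeg q)) X
      else mf_shift1 q (mf_twist (dscale (n div 2) (cdeg q)) X))"

definition is_mor :: "nat \<Rightarrow> nat \<Rightarrow> mf \<Rightarrow> mf \<Rightarrow> mat \<times> mat \<Rightarrow> bool" where
  "is_mor p q X Y \<phi> \<longleftrightarrow>
     hom_mat p q (fst \<phi>) (d0 X) (d0 Y) \<and> hom_mat p q (snd \<phi>) (d1 X) (d1 Y) \<and>
     meq (length (d1 Y)) (length (d0 X))
         (mmul (length (d1 X)) (snd \<phi>) (f0 X)) (mmul (length (d0 Y)) (f0 Y) (fst \<phi>)) \<and>
     meq (length (d0 Y)) (length (d1 X))
         (mmul (length (d0 X)) (fst \<phi>) (f1 X)) (mmul (length (d1 Y)) (f1 Y) (snd \<phi>))"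

definition nullhtp :: "nat \<Rightarrow> nat \<Rightarrow> mf \<Rightarrow> mf \<Rightarrow> mat \<times> mat \<Rightarrow> bool" where
  "nullhtp p q X Y \<phi> \<longleftrightarrow>
     (\<exists>h0 h1. hom_mat p q h0 (d0 X) (twistd (dscale (-1) (cdeg q)) (d1 Y)) \<and>
              hom_mat p q h1 (d1 X) (d0 Y) \<and>
      meq (length (d0 Y)) (length (d0 X)) (fst \<phi>)
          (madd (mmul (length (d1 Y)) (f1 Y) h0) (mmul (length (d1 X)) h1 (f0 X))) \<and>
      meq (length (d1 Y)) (length (d1 X)) (snd \<phi>)
          (madd (mmul (length (d0 Y)) (f0 Y) h1) (mmul (length (d0 X)) h0 (f1 X))))"

definition homotopic :: "nat \<Rightarrow> nat \<Rightarrow> mf \<Rightarrow> mf \<Rightarrow> mat \<times> mat \<Rightarrow> mat \<times> mat \<Rightarrow> bool" where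
  "homotopic p q X Y \<phi> \<psi> \<longleftrightarrow>
     nullhtp p q X Y (madd (fst \<phi>) (mneg (fst \<psi>)), madd (snd \<phi>) (mneg (snd \<psi>)))"

definition scal_id :: "complex \<Rightarrow> mat \<times> mat" where
  "scal_id a = (smat [:[:a:]:], smat [:[:a:]:])"

text \<open>Stabilisation of K_y = R/(y) = coker(y : S(-y) -> S): the MF
 S(-c) --(x^p + y^(q-1))--> S(-y) --y--> S.\<close>
definition Ky :: "nat \<Rightarrow> nat \<Rightarrow> mf" where
  "Ky p q = \<lparr>d0 = [dscale (-1) (cdeg q)], d1 = [dscale (-1) ydeg],
             f0 = (\<lambda>_ _. Xv ^ p + Yv ^ (q - 1)), f1 = (\<lambda>_ _. Yv)\<rparr>"

definition Kyj :: "nat \<Rightarrow> nat \<Rightarrow> nat \<Rightarrow> mf" where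
  "Kyj p q j = mf_twist (dscale (int j + 1 - int q) ydeg) (Ky p q)"

end

theory Submission
  imports Defs
begin

(* Each K_{y,j} is the rank-one factorisation S(-c) --u--> S(-y) --y--> S with u = x^p + y^(q-1),
   twisted by a multiple of the degree of y.  In even shift degree a morphism between two such
   objects is a single homogeneous polynomial P, and it is null-homotopic exactly when
   P = y h0 + u h1 with homogeneous h0, h1.  Since the ideal (y, u) = (y, x^p) contains every
   monomial except 1, and homogeneity forbids monomials x^a with 0 < a < p, this happens iff P has
   no constant term; a constant term needs degree 0, i.e. the same object and no shift, and then it
   is the scalar of the identity.  In odd shift degree the compatibility P1 u = -y P0 forces y | P1,
   because u = x^p modulo y, and P1 / y is a null-homotopy.  Distinct j in 1..q-1 never differ by a
   multiple of q, which gives orthogonality. *)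

lemma Yv_nonzero: "Yv \<noteq> 0"
  by (simp add: Yv_def)

lemma coeff_coeff_Yv_0: "coeff (coeff Yv 0) 0 = 0"
  by (simp add: Yv_def)

lemma Yv_pow: "Yv ^ n = [:monom 1 n:]"
  by (induction n) (simp_all add: Yv_def one_pCons monom_Suc)

lemma coeff_Yv_pow_mult: "coeff (Yv ^ n * G) a = monom 1 n * coeff G a"
  by (simp add: Yv_pow)

lemma Xv_pow: "Xv ^ n = monom 1 n"
  by (simp add: Xv_def monom_altdef)

lemma coeff_Xv_pow_mult: "coeff (Xv ^ n * G) a = (if a < n then 0 else coeff G (a - n))"
  by (simp add: Xv_pow coeff_monom_mult)

lemma homog_zero: "homog p q 0 d"
  by (simp add: homog_def)

lemma homog_const: "homog p q [:[:c:]:] (0, 0)"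
  by (auto simp: homog_def Leq_def coeff_pCons split: nat.splits)

lemma homog_diff: "homog p q f d \<Longrightarrow> homog p q g d \<Longrightarrow> homog p q (f - g) d"
  unfolding homog_def by (metis coeff_diff diff_zero)

lemma homog_0_coeffE:
  assumes "homog p q F (0, \<delta>)" and "coeff (coeff F a) b \<noteq> 0"
  obtains k where "int a = k * int p" and "int b = \<delta> - k * (int q - 1)"
  using assms by (fastforce simp: homog_def Leq_def)

lemma homog_Yv_pow_mult:
  assumes "homog p q F (a, b)"
  shows "homog p q (Yv ^ n * F) (a, b + int n)"
  unfolding homog_def
proof (intro allI impI)
  fix i j assume "coeff (coeff (Yv ^ n * F) i) j \<noteq> 0"
  then have "n \<le> j" and "coeff (coeff F i) (j - n) \<noteq> 0"
    by (auto simp: coeff_Yv_pow_mult coeff_monom_mult split: if_splits)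
  with assms show "Leq p q (int i, int j) (a, b + int n)"
    by (fastforce simp: homog_def Leq_def)
qed

lemma homog_Yv_mult_cancel:
  assumes "homog p q (Yv * F) (a, b)"
  shows "homog p q F (a, b - 1)"
  unfolding homog_def
proof (intro allI impI)
  fix i j assume "coeff (coeff F i) j \<noteq> 0"
  then have "coeff (coeff (Yv * F) i) (Suc j) \<noteq> 0"
    by (simp add: Yv_def)
  with assms show "Leq p q (int i, int j) (a, b - 1)"
    by (fastforce simp: homog_def Leq_def)
qed

lemma homog_map_poly_shift_1:
  assumes "homog p q F (a, b)"
  shows "homog p q (map_poly (poly_shift 1) F) (a, b - 1)"
  unfolding homog_def
proof (intro allI impI)
  fix i j assume "coeff (coeff (map_poly (poly_shift 1) F) i) j \<noteq> 0"
  then have "coeff (coeff F i) (Suc j) \<noteq> 0"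
    by (simp add: coeff_map_poly coeff_poly_shift)
  with assms show "Leq p q (int i, int j) (a, b - 1)"
    by (fastforce simp: homog_def Leq_def)
qed

lemma map_poly_mult_hom:
  fixes f :: "'a::comm_ring_1 \<Rightarrow> 'b::comm_ring_1"
  assumes "\<And>x y. f (x + y) = f x + f y" and "\<And>x y. f (x * y) = f x * f y" and "f 0 = 0"
  shows "map_poly f (P * Q) = map_poly f P * map_poly f Q"
proof (induction P)
  case (pCons a P)
  have "map_poly f (A + B) = map_poly f A + map_poly f B" for A B
    by (intro poly_eqI) (simp add: coeff_map_poly assms)
  with pCons.IH show ?case
    by (simp add: map_poly_smult map_poly_pCons assms)
qed simp

lemma pol_split_Yv:
  "F = map_poly (\<lambda>c. [:coeff c 0:]) F + Yv * map_poly (poly_shift 1) F"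
  by (intro poly_eqI)
    (simp add: Yv_def coeff_map_poly coeff_poly_shift poly_eq_iff coeff_pCons split: nat.split)

lemma Yv_dvd_iff: "Yv dvd F \<longleftrightarrow> map_poly (\<lambda>c. coeff c 0) F = 0"
proof
  assume "Yv dvd F"
  then obtain G where "F = Yv * G" ..
  moreover have "map_poly (\<lambda>c. coeff c 0) Yv = 0"
    by (simp add: Yv_def poly_eq_iff coeff_map_poly coeff_pCons split: nat.split)
  ultimately show "map_poly (\<lambda>c. coeff c 0) F = 0"
    by (simp add: map_poly_mult_hom coeff_mult_0)
next
  assume "map_poly (\<lambda>c. coeff c 0) F = 0"
  then have "map_poly (\<lambda>c. [:coeff c 0:]) F = 0"
    by (simp add: poly_eq_iff coeff_map_poly)
  then show "Yv dvd F"
    by (metis pol_split_Yv add_0 dvd_triv_left)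
qed

lemma Yv_dvd_mult_u:
  assumes "q \<ge> 2" and "Yv dvd A * (Xv ^ p + Yv ^ (q - 1))"
  shows "Yv dvd A"
proof -
  let ?\<psi> = "map_poly (\<lambda>c. coeff c 0 :: complex)"
  have "A * (Xv ^ p + Yv ^ (q - 1)) = A * Xv ^ p + Yv * (A * Yv ^ (q - 2))"
    using assms(1) by (simp add: algebra_simps power_Suc[symmetric] Suc_diff_Suc numeral_2_eq_2)
  with assms(2) have "Yv dvd A * Xv ^ p"
    by (metis dvd_add_left_iff dvd_triv_left)
  moreover have "?\<psi> (Xv ^ p) = monom 1 p"
    by (simp add: Xv_pow map_poly_monom)
  ultimately have "?\<psi> A * monom 1 p = 0"
    by (simp add: Yv_dvd_iff map_poly_mult_hom coeff_mult_0)
  then show ?thesis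
    by (simp add: Yv_dvd_iff)
qed

lemma homog_const_coeff_eq_0:
  assumes "homog p q F (0, \<delta>)" and "p \<ge> 1" and "\<delta> \<noteq> 0"
  shows "coeff (coeff F 0) 0 = 0"
proof (rule ccontr)
  assume "coeff (coeff F 0) 0 \<noteq> 0"
  with assms(1) obtain k where "0 = k * int p" and "0 = \<delta> - k * (int q - 1)"
    by (rule homog_0_coeffE) simp
  with assms(2,3) show False by simp
qed

lemma homog_coeff_0_below:
  assumes "homog p q F (0, \<delta>)" and "coeff (coeff F 0) 0 = 0" and "a < p"
  shows "coeff (coeff F a) 0 = 0"
proof (rule ccontr)
  assume nz: "coeff (coeff F a) 0 \<noteq> 0"
  with assms(2) have "0 < a" by (cases a) auto
  from assms(1) nz obtain k where "int a = k * int p"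
    by (rule homog_0_coeffE)
  then have "p dvd a"
    by (metis dvd_triv_right int_dvd_int_iff)
  with \<open>0 < a\<close> \<open>a < p\<close> show False
    by (simp add: dvd_imp_le leD)
qed

lemma homog_decompose_Yv_u:
  assumes hF: "homog p q F (0, \<delta>)" and c0: "coeff (coeff F 0) 0 = 0" and "q \<ge> 2"
  obtains h0 h1 where "F = Yv * h0 + h1 * (Xv ^ p + Yv ^ (q - 1))"
    and "homog p q h0 (0, \<delta> - 1)" and "homog p q h1 (0, \<delta> - (int q - 1))"
proof -
  \<comment> \<open>F = G + y H with G the y-free part; homogeneity makes G = x^p B, and x^p = u - y^(q-1).\<close>
  define G where "G = map_poly (\<lambda>c. [:coeff c 0:]) F"
  define H where "H = map_poly (poly_shift 1) F"
  define B where "B = poly_shift p G"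
  have coeff_B: "coeff (coeff B a) b = (if b = 0 then coeff (coeff F (a + p)) 0 else 0)" for a b
    by (simp add: B_def G_def coeff_poly_shift coeff_map_poly coeff_pCons split: nat.split)
  have "G = Xv ^ p * B"
    by (intro poly_eqI) (simp add: coeff_Xv_pow_mult G_def B_def coeff_map_poly coeff_poly_shift
        homog_coeff_0_below[OF hF c0])
  moreover have "Yv ^ (q - 1) = Yv * Yv ^ (q - 2)"
    using \<open>q \<ge> 2\<close> by (simp add: power_Suc[symmetric] Suc_diff_Suc numeral_2_eq_2)
  ultimately have "F = Yv * (H - Yv ^ (q - 2) * B) + B * (Xv ^ p + Yv ^ (q - 1))"
    using pol_split_Yv[of F] by (simp add: G_def H_def algebra_simps)
  moreover have hB: "homog p q B (0, \<delta> - (int q - 1))"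
    unfolding homog_def
  proof (intro allI impI)
    fix a b assume "coeff (coeff B a) b \<noteq> 0"
    then have "b = 0" and nz: "coeff (coeff F (a + p)) 0 \<noteq> 0"
      by (simp_all add: coeff_B split: if_splits)
    from hF nz obtain k where "int (a + p) = k * int p" and "int 0 = \<delta> - k * (int q - 1)"
      by (rule homog_0_coeffE)
    with \<open>b = 0\<close> show "Leq p q (int a, int b) (0, \<delta> - (int q - 1))"
      unfolding Leq_def by (intro exI[of _ "k - 1"]) (simp add: algebra_simps)
  qed
  moreover have "homog p q (H - Yv ^ (q - 2) * B) (0, \<delta> - 1)"
  proof (rule homog_diff)
    show "homog p q H (0, \<delta> - 1)"
      unfolding H_def using hF by (rule homog_map_poly_shift_1)
    show "homog p q (Yv ^ (q - 2) * B) (0, \<delta> - 1)"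
      using homog_Yv_pow_mult[OF hB, of "q - 2"] \<open>q \<ge> 2\<close> by (simp add: of_nat_diff)
  qed
  ultimately show thesis
    using that by blast
qed

definition Ky_twist :: "nat \<Rightarrow> nat \<Rightarrow> int \<Rightarrow> mf" where
  "Ky_twist p q t = mf_twist (dscale t ydeg) (Ky p q)"

lemma Ky_twist_eq:
  "Ky_twist p q t = \<lparr>d0 = [(0, t - int q)], d1 = [(0, t - 1)],
     f0 = (\<lambda>_ _. Xv ^ p + Yv ^ (q - 1)), f1 = (\<lambda>_ _. Yv)\<rparr>"
  by (simp add: Ky_twist_def Ky_def mf_twist_def twistd_def dadd_def dscale_def cdeg_def ydeg_def)

lemma Kyj_eq_Ky_twist: "Kyj p q j = Ky_twist p q (int j + 1 - int q)"
  by (simp add: Kyj_def Ky_twist_def)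

lemma mf_shift_Ky_twist:
  "mf_shift q n (Ky_twist p q t) =
     (if even n then Ky_twist p q (t + n div 2 * int q)
      else mf_shift1 q (Ky_twist p q (t + n div 2 * int q)))"
  by (simp add: mf_shift_def Ky_twist_eq mf_twist_def twistd_def dadd_def dscale_def cdeg_def
      algebra_simps)

lemma mmul_Suc_0: "mmul (Suc 0) A B = (\<lambda>i j. A i 0 * B 0 j)"
  by (simp add: mmul_def)

lemma is_mor_Ky_twistD:
  assumes "is_mor p q (Ky_twist p q s) (Ky_twist p q t) \<phi>"
  shows "homog p q (fst \<phi> 0 0) (0, t - s)" and "snd \<phi> 0 0 = fst \<phi> 0 0"
proof -
  show "homog p q (fst \<phi> 0 0) (0, t - s)"
    using assms by (simp add: is_mor_def hom_mat_def Ky_twist_eq dsub_def)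
  have "fst \<phi> 0 0 * Yv = Yv * snd \<phi> 0 0"
    using assms by (simp add: is_mor_def meq_def Ky_twist_eq mmul_Suc_0)
  then show "snd \<phi> 0 0 = fst \<phi> 0 0"
    using Yv_nonzero by (simp add: mult.commute)
qed

lemma is_mor_Ky_twist_shift1D:
  assumes "is_mor p q (Ky_twist p q s) (mf_shift1 q (Ky_twist p q t)) \<phi>"
  shows "homog p q (snd \<phi> 0 0) (0, t - s + 1)"
    and "snd \<phi> 0 0 * (Xv ^ p + Yv ^ (q - 1)) = - Yv * fst \<phi> 0 0"
  using assms
  by (simp_all add: is_mor_def hom_mat_def meq_def Ky_twist_eq mf_shift1_def twistd_def
      dsub_def dadd_def cdeg_def mmul_Suc_0 mneg_def algebra_simps)

lemma nullhtp_Ky_twist_iff: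
  "nullhtp p q (Ky_twist p q s) (Ky_twist p q t) \<phi> \<longleftrightarrow>
     (\<exists>h0 h1. homog p q h0 (0, t - s - 1) \<and> homog p q h1 (0, t - s - (int q - 1)) \<and>
        fst \<phi> 0 0 = Yv * h0 + h1 * (Xv ^ p + Yv ^ (q - 1)) \<and>
        snd \<phi> 0 0 = Yv * h0 + h1 * (Xv ^ p + Yv ^ (q - 1)))"
  (is "_ \<longleftrightarrow> (\<exists>h0 h1. ?htp h0 h1)")
proof -
  have "nullhtp p q (Ky_twist p q s) (Ky_twist p q t) \<phi> \<longleftrightarrow>
      (\<exists>(h0::mat) (h1::mat). ?htp (h0 0 0) (h1 0 0))"
    unfolding nullhtp_def
    by (simp add: hom_mat_def meq_def Ky_twist_eq twistd_def dsub_def dadd_def dscale_def cdeg_def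
        mmul_Suc_0 madd_def algebra_simps)
  also have "\<dots> \<longleftrightarrow> (\<exists>h0 h1. ?htp h0 h1)"
  proof
    assume "\<exists>h0 h1. ?htp h0 h1"
    then obtain h0 h1 where "?htp h0 h1" by blast
    then show "\<exists>(h0::mat) (h1::mat). ?htp (h0 0 0) (h1 0 0)"
      by (intro exI[of _ "\<lambda>_ _. h0"] exI[of _ "\<lambda>_ _. h1"])
  qed blast
  finally show ?thesis .
qed

lemma nullhtp_Ky_twist_shift1I:
  assumes "homog p q g (0, t - s)"
    and "fst \<phi> 0 0 = - (g * (Xv ^ p + Yv ^ (q - 1)))" and "snd \<phi> 0 0 = Yv * g"
  shows "nullhtp p q (Ky_twist p q s) (mf_shift1 q (Ky_twist p q t)) \<phi>"
  unfolding nullhtp_def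
proof (intro exI conjI)
  show "hom_mat p q (\<lambda>_ _. g) (d0 (Ky_twist p q s))
          (twistd (dscale (- 1) (cdeg q)) (d1 (mf_shift1 q (Ky_twist p q t))))"
    using assms(1) by (simp add: hom_mat_def Ky_twist_eq mf_shift1_def twistd_def dsub_def dadd_def
        dscale_def cdeg_def algebra_simps)
  show "hom_mat p q (\<lambda>_ _. 0) (d1 (Ky_twist p q s)) (d0 (mf_shift1 q (Ky_twist p q t)))"
    by (simp add: hom_mat_def homog_zero)
qed (use assms(2,3) in \<open>simp_all add: meq_def Ky_twist_eq mf_shift1_def twistd_def mmul_Suc_0
      madd_def mneg_def algebra_simps\<close>)

lemma mor_Ky_twist_homotopic_scal_id:
  assumes mor: "is_mor p q (Ky_twist p q s) (Ky_twist p q t) \<phi>" and "p \<ge> 1" and "q \<ge> 2"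
  defines "c \<equiv> if s = t then coeff (coeff (fst \<phi> 0 0) 0) 0 else 0"
  shows "homotopic p q (Ky_twist p q s) (Ky_twist p q t) \<phi> (scal_id c)"
proof -
  define F where "F = fst \<phi> 0 0 - [:[:c:]:]"
  have hP: "homog p q (fst \<phi> 0 0) (0, t - s)"
    using mor by (rule is_mor_Ky_twistD)
  have hF: "homog p q F (0, t - s)"
    using hP homog_const[of p q c] by (cases "s = t") (simp_all add: F_def c_def homog_diff)
  have "coeff (coeff F 0) 0 = 0"
    using homog_const_coeff_eq_0[OF hP \<open>p \<ge> 1\<close>] by (cases "s = t") (simp_all add: F_def c_def)
  then obtain h0 h1 where "F = Yv * h0 + h1 * (Xv ^ p + Yv ^ (q - 1))"
    and "homog p q h0 (0, t - s - 1)" and "homog p q h1 (0, t - s - (int q - 1))"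
    using homog_decompose_Yv_u[OF hF _ \<open>q \<ge> 2\<close>] by blast
  moreover have "snd \<phi> 0 0 = fst \<phi> 0 0"
    using mor by (rule is_mor_Ky_twistD)
  ultimately show ?thesis
    unfolding homotopic_def nullhtp_Ky_twist_iff
    by (auto simp: scal_id_def madd_def mneg_def smat_def F_def)
qed

lemma homotopic_scal_id_0_iff: "homotopic p q X Y \<phi> (scal_id 0) \<longleftrightarrow> nullhtp p q X Y \<phi>"
proof -
  have "madd A (mneg (smat 0)) = A" for A
    by (simp add: madd_def mneg_def smat_def)
  then show ?thesis
    by (simp add: homotopic_def scal_id_def)
qed

lemma not_nullhtp_Ky_twist_scal_id_1:
  assumes "p \<ge> 1" and "q \<ge> 2"
  shows "\<not> nullhtp p q (Ky_twist p q t) (Ky_twist p q t) (scal_id 1)"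
proof
  assume "nullhtp p q (Ky_twist p q t) (Ky_twist p q t) (scal_id 1)"
  then obtain h0 h1 where "1 = Yv * h0 + h1 * (Xv ^ p + Yv ^ (q - 1))"
    by (auto simp: nullhtp_Ky_twist_iff scal_id_def smat_def one_pCons)
  then have "coeff (coeff (1 :: pol) 0) 0 =
      coeff (coeff (Yv * h0 + h1 * (Xv ^ p + Yv ^ (q - 1))) 0) 0"
    by (rule arg_cong)
  also have "\<dots> = 0"
    using assms by (simp add: coeff_mult_0 Xv_pow Yv_pow coeff_coeff_Yv_0)
  finally show False by simp
qed

lemma mor_Ky_twist_shift1_nullhtp:
  assumes mor: "is_mor p q (Ky_twist p q s) (mf_shift1 q (Ky_twist p q t)) \<phi>" and "q \<ge> 2"
  shows "nullhtp p q (Ky_twist p q s) (mf_shift1 q (Ky_twist p q t)) \<phi>"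
proof -
  have hP1: "homog p q (snd \<phi> 0 0) (0, t - s + 1)"
    and eq: "snd \<phi> 0 0 * (Xv ^ p + Yv ^ (q - 1)) = - Yv * fst \<phi> 0 0"
    using is_mor_Ky_twist_shift1D[OF mor] by simp_all
  have "Yv dvd snd \<phi> 0 0"
    using Yv_dvd_mult_u[OF \<open>q \<ge> 2\<close>, of _ p] eq by simp
  then obtain g where g: "snd \<phi> 0 0 = Yv * g" ..
  with eq have "Yv * (g * (Xv ^ p + Yv ^ (q - 1))) = Yv * (- fst \<phi> 0 0)"
    by (simp add: algebra_simps)
  then have "fst \<phi> 0 0 = - (g * (Xv ^ p + Yv ^ (q - 1)))"
    using Yv_nonzero mult_left_cancel by (metis minus_equation_iff)
  moreover have "homog p q g (0, t - s)"
    using homog_Yv_mult_cancel[of p q g 0 "t - s + 1"] hP1 g by simp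
  ultimately show ?thesis
    using g by (intro nullhtp_Ky_twist_shift1I)
qed

lemma mor_Ky_twist_shift_nullhtp:
  assumes mor: "is_mor p q (Ky_twist p q s) (mf_shift q n (Ky_twist p q t)) \<phi>"
    and "p \<ge> 1" and "q \<ge> 2" and "odd n \<or> s \<noteq> t + n div 2 * int q"
  shows "nullhtp p q (Ky_twist p q s) (mf_shift q n (Ky_twist p q t)) \<phi>"
proof (cases "even n")
  case True
  then show ?thesis
    using mor_Ky_twist_homotopic_scal_id[of p q s "t + n div 2 * int q" \<phi>] mor assms(2-4)
    by (simp add: mf_shift_Ky_twist homotopic_scal_id_0_iff)
next
  case False
  then show ?thesis
    using mor_Ky_twist_shift1_nullhtp[of p q s "t + n div 2 * int q" \<phi>] mor assms(3)
    by (simp add: mf_shift_Ky_twist)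
qed

lemma eq_add_mult_less_imp_eq:
  fixes m :: int
  assumes "i < q" and "j < q" and "int i = int j + m * int q"
  shows "m = 0"
proof (rule ccontr)
  assume "m \<noteq> 0"
  then have "1 * int q \<le> \<bar>m\<bar> * int q"
    by (intro mult_right_mono) auto
  moreover have "\<bar>m\<bar> * int q = \<bar>int i - int j\<bar>"
    using assms(3) by (simp add: abs_mult)
  ultimately show False
    using assms(1,2) by linarith
qed

theorem lemma4p2:
  fixes p q :: nat
  assumes "p \<ge> 2" and "q \<ge> 2"
  shows "(\<forall>j\<in>{1..q-1}.
            \<not> nullhtp p q (Kyj p q j) (Kyj p q j) (scal_id 1) \<and>
            (\<forall>\<phi>. is_mor p q (Kyj p q j) (Kyj p q j) \<phi> \<longrightarrow>
                 (\<exists>a::complex. homotopic p q (Kyj p q j) (Kyj p q j) \<phi> (scal_id a))) \<and>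
            (\<forall>n::int. n \<noteq> 0 \<longrightarrow> (\<forall>\<phi>. is_mor p q (Kyj p q j) (mf_shift q n (Kyj p q j)) \<phi> \<longrightarrow>
                 nullhtp p q (Kyj p q j) (mf_shift q n (Kyj p q j)) \<phi>))) \<and>
         (\<forall>i\<in>{1..q-1}. \<forall>j\<in>{1..q-1}. i \<noteq> j \<longrightarrow>
            (\<forall>n::int. \<forall>\<phi>. is_mor p q (Kyj p q i) (mf_shift q n (Kyj p q j)) \<phi> \<longrightarrow>
                 nullhtp p q (Kyj p q i) (mf_shift q n (Kyj p q j)) \<phi>))"
proof -
  have "p \<ge> 1" using assms(1) by simp
  have diagonal: "odd n \<or> t \<noteq> t + n div 2 * int q" if "n \<noteq> 0" for t n :: int
    using that \<open>q \<ge> 2\<close> by auto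
  have off_diagonal: "odd n \<or> int i + 1 - int q \<noteq> int j + 1 - int q + n div 2 * int q"
    if "i \<in> {1..q-1}" and "j \<in> {1..q-1}" and "i \<noteq> j" for i j :: nat and n :: int
    using that eq_add_mult_less_imp_eq[of i q j "n div 2"] by auto
  show ?thesis
    unfolding Kyj_eq_Ky_twist
    using not_nullhtp_Ky_twist_scal_id_1[OF \<open>p \<ge> 1\<close> \<open>q \<ge> 2\<close>]
      mor_Ky_twist_homotopic_scal_id[OF _ \<open>p \<ge> 1\<close> \<open>q \<ge> 2\<close>]
      mor_Ky_twist_shift_nullhtp[OF _ \<open>p \<ge> 1\<close> \<open>q \<ge> 2\<close>] diagonal off_diagonal
    by blast
qed

end
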